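(* Let $N\ge1$, $\underline s=(s_1,\dots,s_N)\in\mathbb{Z}^N$, and complex $z_1,\dots,z_N$ with $|z_1|>1$, $|z_i|\ge1$. (i) Suppose $N\ge2$ and $2\le p\le N$; let $m_1=0$ and $m_2,\dots,m_p\ge0$, $j_1,\dots,j_p\ge0$ be integers. Let $\underline m^{(p)}=(m_1,\dots,m_p,j_p,0,\dots,0)\in\mathbb{N}^N$ if $p<N$ and $\underline m^{(N)}=(m_1,\dots,m_N)$; let $\underline j^{(p)}=(j_1,\dots,j_p,0,\dots,0)\in\mathbb{N}^N$. Let $\underline m'=(m_1,\dots,m_{p-1},j_{p-1},0,\dots,0)\in\mathbb{N}^N$ and $\underline j'=(j_1,\dots,j_{p-1},0,\dots,0)\in\mathbb{N}^N$. Then $$\mathrm{B}_N\!\left[\begin{smallmatrix}\underline s\\ \underline m^{(p)}\\ \underline j^{(p)}\end{smallmatrix}\Big|\underline z\right]=z_p^{j_p}\,\mathrm{B}_N\!\left[\begin{smallmatrix}\underline s\\ \underline m'\\ \underline j'\end{smallmatrix}\Big|\underline z\right]-z_p^{j_p}Q_{N,p}(j_p;z_p,\dots,z_N)\,\mathrm{B}_{p-1}\!\left[\begin{smallmatrix}s_1,\dots,s_{p-1}\\ m_1,\dots,m_{p-1}\\ j_1,\dots,j_{p-1}\end{smallmatrix}\Big|z_1,\dots,z_{p-1}\right]+\varepsilon_p\sum_{k=t_p+1}^{T_p}z_p^{j_p-k}R_{N,p}(k).$$ (ii) For every integer $j_1\ge0$, with modulations $(0,j_1,0,\dots,0)\in\mathbb{N}^N$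 (just $(0)$ if $N=1$) and shifts $(j_1,0,\dots,0)\in\mathbb{N}^N$, $$\mathrm{B}_N\!\left[\begin{smallmatrix}\underline s\\ (0,j_1,0,\dots,0)\\ (j_1,0,\dots,0)\end{smallmatrix}\Big|\underline z\right]=z_1^{j_1}\mathrm{La}_{s_1,\dots,s_N}(1/z_1,\dots,1/z_N)-z_1^{j_1}Q_{N,1}(j_1;z_1,\dots,z_N).$$
   Context: For $r\ge1$, $\underline s\in\mathbb{Z}^r$, $\underline m\in\mathbb{N}^r$ with $m_1=0$, $\underline j\in\mathbb{N}^r$ and complex $w_i$ ($|w_1|>1$, $|w_i|\ge1$): $\mathrm{B}_r\!\left[\begin{smallmatrix}\underline s\\ \underline m\\ \underline j\end{smallmatrix}\Big|\underline w\right]=\sum\frac{w_1^{-k_1}\cdots w_r^{-k_r}}{(k_1+j_1)^{s_1}\cdots(k_r+j_r)^{s_r}}$ over $k_1\ge1$, $1\le k_i\le k_{i-1}+m_i$ ($2\le i\le r$); $\mathrm{B}_0=1$. $\mathrm{La}_{s_1,\dots,s_N}(w_1,\dots,w_N)=\sum_{k_1\ge\cdots\ge k_N\ge1}\frac{w_1^{k_1}\cdots w_N^{k_N}}{k_1^{s_1}\cdots k_N^{s_N}}$. For $1\le p\le N$, $K\ge0$: $Q_{N,p}(K;z_p,\dots,z_N)=\sum_{K\ge k_p\ge\cdots\ge k_N\ge1}\prod_{i=p}^Nz_i^{-k_i}k_i^{-s_i}$ ($0$ if $K=0$), $Q_{N,N+1}=1$. $\varepsilon_{a,b}=1,-1,0$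 according as $a<b$, $a>b$, $a=b$; $\varepsilon_p=\varepsilon_{j_{p-1},j_p+m_p}$, $t_p=\min(j_{p-1},j_p+m_p)$, $T_p=\max(j_{p-1},j_p+m_p)$. For $K\ge0$: $R_{N,p}(K)=\sum\frac{z_1^{-k_1}\cdots z_{p-2}^{-k_{p-2}}(z_{p-1}z_p)^{-k_{p-1}}}{\big(\prod_{i=1}^{p-1}(k_i+j_i)^{s_i}\big)(k_{p-1}+K)^{s_p}}Q_{N,p+1}(k_{p-1}+K;z_{p+1},\dots,z_N)$ over $k_1\ge1$, $1\le k_i\le k_{i-1}+m_i$ ($2\le i\le p-1$); for $p=2$ the factor $z_1^{-k_1}\cdots z_{p-2}^{-k_{p-2}}$ is $1$. *)

theory Defs
  imports "HOL-Analysis.Analysis"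
begin

text \<open>Conventions: tuples are functions on nat, read with 1-based indices
  (\<open>s i\<close>, \<open>z i\<close>, \<open>m i\<close>, \<open>j i\<close> for \<open>i = 1, 2, ...\<close>); values at other indices are irrelevant.
  Summation indices \<open>(k_1,...,k_r)\<close> are lists \<open>k\<close> of length r with \<open>k_i = k!(i-1)\<close>.\<close>

definition Bidx :: "nat \<Rightarrow> (nat \<Rightarrow> nat) \<Rightarrow> nat list set" where
  "Bidx r m = {k. length k = r \<and> (r \<ge> 1 \<longrightarrow> k!0 \<ge> 1) \<and>
      (\<forall>i. 2 \<le> i \<and> i \<le> r \<longrightarrow> 1 \<le> k!(i-1) \<and> k!(i-1) \<le> k!(i-2) + m i)}"

text \<open>\<open>B_r[s; m; j | w]\<close>; the empty product gives \<open>B_0 = 1\<close>.\<close>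
definition B :: "nat \<Rightarrow> (nat \<Rightarrow> int) \<Rightarrow> (nat \<Rightarrow> nat) \<Rightarrow> (nat \<Rightarrow> nat) \<Rightarrow> (nat \<Rightarrow> complex) \<Rightarrow> complex" where
  "B r s m j w = infsum (\<lambda>k. \<Prod>i=1..r. w i powi (- int (k!(i-1)))
        * of_nat (k!(i-1) + j i) powi (- s i)) (Bidx r m)"

definition Laidx :: "nat \<Rightarrow> nat list set" where
  "Laidx N = {k. length k = N \<and> (\<forall>i<N. 1 \<le> k!i) \<and> (\<forall>i. i + 1 < N \<longrightarrow> k!(i+1) \<le> k!i)}"

definition La :: "nat \<Rightarrow> (nat \<Rightarrow> int) \<Rightarrow> (nat \<Rightarrow> complex) \<Rightarrow> complex" where
  "La N s w = infsum (\<lambda>k. \<Prod>i=1..N. w i ^ (k!(i-1)) * of_nat (k!(i-1)) powi (- s i)) (Laidx N)"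

text \<open>\<open>Q_{N,p}(K; z_p,...,z_N)\<close>: finite sum over \<open>K \<ge> k_p \<ge> ... \<ge> k_N \<ge> 1\<close>,
  with \<open>k_i = k!(i-p)\<close>.  For \<open>p = N+1\<close> this is 1, and for \<open>p \<le> N\<close>, \<open>K = 0\<close> it is 0.\<close>
definition Qidx :: "nat \<Rightarrow> nat \<Rightarrow> nat list set" where
  "Qidx n K = {k. length k = n \<and> (\<forall>i<n. 1 \<le> k!i \<and> k!i \<le> K) \<and> (\<forall>i. i + 1 < n \<longrightarrow> k!(i+1) \<le> k!i)}"

definition Q :: "nat \<Rightarrow> nat \<Rightarrow> (nat \<Rightarrow> int) \<Rightarrow> (nat \<Rightarrow> complex) \<Rightarrow> nat \<Rightarrow> complex" where
  "Q N p s z K = (\<Sum>k\<in>Qidx (N + 1 - p) K. \<Prod>i=p..N. z i powi (- int (k!(i-p)))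
        * of_nat (k!(i-p)) powi (- s i))"

definition R :: "nat \<Rightarrow> nat \<Rightarrow> (nat \<Rightarrow> int) \<Rightarrow> (nat \<Rightarrow> nat) \<Rightarrow> (nat \<Rightarrow> nat) \<Rightarrow> (nat \<Rightarrow> complex) \<Rightarrow> nat \<Rightarrow> complex" where
  "R N p s m j z K = infsum (\<lambda>k.
        (\<Prod>i=1..p-2. z i powi (- int (k!(i-1))))
      * (z (p-1) * z p) powi (- int (k!(p-2)))
      * (\<Prod>i=1..p-1. of_nat (k!(i-1) + j i) powi (- s i))
      * of_nat (k!(p-2) + K) powi (- s p)
      * Q N (p+1) s z (k!(p-2) + K)) (Bidx (p-1) m)"

definition eps :: "nat \<Rightarrow> nat \<Rightarrow> int" where
  "eps a b = (if a < b then 1 else if a > b then -1 else 0)"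

end

theory Submission
  imports Defs "HOL-Real_Asymp.Real_Asymp"
begin

text \<open>Every series here converges absolutely: the first index carries the factor
  \<open>|z_1|^{-k_1}\<close>, every later index is at most \<open>k_1 + \<Sum> m_i\<close>, so only polynomially many
  terms share a value of \<open>k_1\<close> and each of them is polynomially bounded in \<open>k_1\<close>.
  If the modulations vanish beyond position \<open>p+1\<close> and the shifts beyond \<open>p\<close>, an index splits
  as \<open>a @ x # b\<close> with \<open>a\<close> an index of \<open>B_{p-1}\<close>, \<open>1 \<le> x \<le> k_{p-1} + m_p\<close>, and \<open>b\<close> ranging over
  the finite index set of \<open>Q_{N,p+1}(x + m_{p+1})\<close>; summing out \<open>b\<close> and, when \<open>m_{p+1} = j_p\<close>,
  substituting \<open>x + j_p\<close> for \<open>x\<close> turns the sum over \<open>x\<close> into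
  \<open>z_p^{j_p} (Q_{N,p}(k_{p-1} + m_p + j_p) - Q_{N,p}(j_p))\<close>.
  With \<open>S(k)\<close> the series with modulation \<open>k\<close> at position \<open>p\<close> and no later data, the left side
  of (i) is \<open>z_p^{j_p} (S(j_p + m_p) - Q_{N,p}(j_p) B_{p-1})\<close>, the first term on the right is
  \<open>z_p^{j_p} S(j_{p-1})\<close>, and \<open>R_{N,p}(k) = z_p^k (S(k) - S(k-1))\<close>, so (i) is a telescoping sum.
  For (ii), \<open>p = 1\<close>: the sum over \<open>x\<close> is infinite, and without the shift it is \<open>La\<close>.\<close>

lemma infsum_diff:
  fixes f g :: "'a \<Rightarrow> 'b::{topological_ab_group_add, t2_space}"
  assumes "f summable_on A" "g summable_on A"
  shows "infsum (\<lambda>x. f x - g x) A = infsum f A - infsum g A"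
  using infsum_add[OF assms(1) summable_on_uminus[THEN iffD2, OF assms(2)]] by (simp add: infsum_uminus)

lemma summable_on_by_fibres:
  fixes f :: "'a \<Rightarrow> 'b::banach" and key :: "'a \<Rightarrow> nat"
  assumes bound: "\<And>k. k \<in> A \<Longrightarrow> norm (f k) \<le> g (key k)"
    and finite: "\<And>n. finite {k \<in> A. key k = n}"
    and summable: "summable (\<lambda>n. real (card {k \<in> A. key k = n}) * g n)"
  shows "f summable_on A"
proof -
  let ?c = "\<lambda>n. real (card {k \<in> A. key k = n})"
  have g_nonneg: "0 \<le> g (key k)" if "k \<in> A" for k
    using bound[OF that] norm_ge_zero[of "f k"] by (metis order.trans)
  have nonneg: "0 \<le> ?c n * g n" for n
  proof (cases "{k \<in> A. key k = n} = {}")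
    case False
    then obtain k where "k \<in> A" "key k = n"
      by auto
    then show ?thesis
      using g_nonneg by auto
  next
    case True
    show ?thesis
      unfolding True by simp
  qed
  have "(\<lambda>k. norm (f k)) summable_on A"
  proof (rule nonneg_bdd_above_summable_on[OF _ bdd_aboveI2])
    fix F assume "F \<in> {F. F \<subseteq> A \<and> finite F}"
    then have F: "F \<subseteq> A" "finite F"
      by auto
    have "(\<Sum>k\<in>F. norm (f k)) \<le> (\<Sum>k\<in>F. g (key k))"
      using F bound by (intro sum_mono) auto
    also have "\<dots> = (\<Sum>n\<in>key ` F. real (card {k \<in> F. key k = n}) * g n)"
      using sum.image_gen[OF F(2), of "\<lambda>k. g (key k)" key] by simp
    also have "\<dots> \<le> (\<Sum>n\<in>key ` F. ?c n * g n)"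
    proof (intro sum_mono mult_right_mono)
      fix n assume "n \<in> key ` F"
      then obtain k where "k \<in> F" "key k = n"
        by auto
      then show "0 \<le> g n"
        using F g_nonneg by auto
      show "real (card {k \<in> F. key k = n}) \<le> ?c n"
        using F finite by (auto intro: card_mono)
    qed
    also have "\<dots> \<le> (\<Sum>n. ?c n * g n)"
      using summable nonneg F(2) by (intro sum_le_suminf) auto
    finally show "(\<Sum>k\<in>F. norm (f k)) \<le> (\<Sum>n. ?c n * g n)" .
  qed simp
  then show ?thesis
    by (rule abs_summable_summable)
qed

lemma summable_poly_div_power:
  fixes q A :: real
  assumes "1 < q" "1 \<le> A"
  shows "summable (\<lambda>n. (real n + A) ^ D / q ^ n)"
proof -
  have "(\<lambda>n. (real n + A) powr real D * q powr (- real n)) \<in> O(\<lambda>n. (q powr (-1/2)) powr real n)"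
    using assms by real_asymp
  moreover have "(\<lambda>n. (real n + A) powr real D * q powr (- real n)) = (\<lambda>n. (real n + A) ^ D / q ^ n)"
    using assms by (auto simp: powr_realpow powr_minus divide_inverse)
  moreover have "(\<lambda>n. (q powr (-1/2)) powr real n) = (\<lambda>n. (q powr (-1/2)) ^ n)"
    using assms by (auto simp: powr_realpow)
  moreover have "summable (\<lambda>n. norm ((q powr (-1/2)) ^ n))"
    using assms by (auto intro!: summable_geometric simp: powr_less_one norm_power)
  ultimately show ?thesis
    using summable_comparison_test_bigo by metis
qed

lemma of_nat_powi_le_power:
  fixes b :: real
  assumes "1 \<le> y" "real y \<le> b"
  shows "real y powi (- s) \<le> b ^ nat \<bar>s\<bar>"
proof (cases "s \<ge> 0")
  case True
  then have "real y powi (- s) \<le> 1"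
    using assms by (simp add: power_int_def power_inverse inverse_le_1_iff)
  also have "1 \<le> b ^ nat \<bar>s\<bar>"
    using assms by simp
  finally show ?thesis .
next
  case False
  then show ?thesis
    using assms by (simp add: power_int_def power_mono)
qed

lemma all_less_split:
  fixes q n :: nat
  assumes "q < n"
  shows "(\<forall>i<n. P i) \<longleftrightarrow> (\<forall>i<q. P i) \<and> P q \<and> (\<forall>t<n - Suc q. P (Suc q + t))"
proof (intro iffI allI impI)
  fix i assume H: "(\<forall>i<q. P i) \<and> P q \<and> (\<forall>t<n - Suc q. P (Suc q + t))" and i: "i < n"
  consider "i < q" | "i = q" | "Suc q \<le> i" by linarith
  then show "P i"
    by cases (use H i in \<open>auto dest: spec[of _ "i - Suc q"]\<close>)
qed (use assms in auto)

lemma eps_telescope: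
  fixes f :: "nat \<Rightarrow> 'a::ring_1"
  shows "of_int (eps a b) * (\<Sum>k = min a b + 1..max a b. f k - f (k-1)) = f b - f a"
proof -
  have telescope: "(\<Sum>k = a+1..b. f k - f (k-1)) = f b - f a" if "a \<le> b" for a b
    using that by (induction b rule: dec_induct) (simp_all add: sum.cl_ivl_Suc)
  consider "a < b" | "b < a" | "a = b"
    by linarith
  then show ?thesis
    by cases (use telescope[of a b] telescope[of b a] in \<open>simp_all add: eps_def\<close>)
qed

definition B_summand ::
    "nat \<Rightarrow> (nat \<Rightarrow> int) \<Rightarrow> (nat \<Rightarrow> nat) \<Rightarrow> (nat \<Rightarrow> complex) \<Rightarrow> nat list \<Rightarrow> complex" where
  "B_summand r s j w k = (\<Prod>i=1..r. w i powi (- int (k!(i-1))) * of_nat (k!(i-1) + j i) powi (- s i))"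

lemma B_eq_infsum_B_summand: "B r s m j w = infsum (B_summand r s j w) (Bidx r m)"
  unfolding B_def B_summand_def ..

lemma B_summand_cong: "(\<And>i. i \<le> r \<Longrightarrow> j i = j' i) \<Longrightarrow> B_summand r s j w = B_summand r s j' w"
  unfolding B_summand_def by (intro ext prod.cong) auto

lemma Bidx_cong: "(\<And>i. i \<le> r \<Longrightarrow> m i = m' i) \<Longrightarrow> Bidx r m = Bidx r m'"
  unfolding Bidx_def by auto

lemma Bidx_iff:
  "k \<in> Bidx r m \<longleftrightarrow> length k = r \<and> (\<forall>i<r. 1 \<le> k!i \<and> (0 < i \<longrightarrow> k!i \<le> k!(i-1) + m (i+1)))"
proof -
  have shift: "(\<forall>i. 2 \<le> i \<and> i \<le> r \<longrightarrow> P i) \<longleftrightarrow> (\<forall>i<r. 0 < i \<longrightarrow> P (i+1))" for P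
  proof (intro iffI allI impI)
    fix i assume H: "\<forall>i<r. 0 < i \<longrightarrow> P (i+1)" and "2 \<le> i \<and> i \<le> r"
    then have "i - 1 < r" "0 < i - 1" "i - 1 + 1 = i"
      by auto
    then show "P i"
      using H[rule_format, of "i-1"] by simp
  qed simp
  have split0: "(\<forall>i<r. P i) \<longleftrightarrow> (1 \<le> r \<longrightarrow> P 0) \<and> (\<forall>i<r. 0 < i \<longrightarrow> P i)" for P
    by (metis gr0I less_one linorder_not_less)
  show ?thesis
    unfolding Bidx_def mem_Collect_eq shift split0[of "\<lambda>i. 1 \<le> k!i \<and> _ i"]
    by (auto simp: Suc_diff_Suc numeral_2_eq_2)
qed

lemma Qidx_iff:
  "k \<in> Qidx n K \<longleftrightarrow> length k = n \<and> (\<forall>i<n. 1 \<le> k!i \<and> k!i \<le> (if i = 0 then K else k!(i-1)))"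
proof
  assume k: "length k = n \<and> (\<forall>i<n. 1 \<le> k!i \<and> k!i \<le> (if i = 0 then K else k!(i-1)))"
  have "k!i \<le> K" if "i < n" for i
    using that by (induction i) (use k in \<open>auto intro: le_trans\<close>)
  with k show "k \<in> Qidx n K"
    unfolding Qidx_def by (auto dest: spec[of _ "Suc i" for i])
next
  assume "k \<in> Qidx n K"
  then have "length k = n" "\<forall>i<n. 1 \<le> k!i \<and> k!i \<le> K" "\<forall>i. i+1 < n \<longrightarrow> k!(i+1) \<le> k!i"
    by (simp_all add: Qidx_def)
  moreover have "k!i \<le> k!(i-1)" if "0 < i" "i < n" for i
    using calculation(3)[rule_format, of "i-1"] that by simp
  ultimately show "length k = n \<and> (\<forall>i<n. 1 \<le> k!i \<and> k!i \<le> (if i = 0 then K else k!(i-1)))"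
    by auto
qed

lemma Cons_in_Qidx_Suc_iff: "x # b \<in> Qidx (Suc n) K \<longleftrightarrow> x \<in> {1..K} \<and> b \<in> Qidx n x"
  using all_less_split[of 0 "Suc n"] unfolding Qidx_iff by (auto simp: nth_Cons')

lemma finite_Qidx: "finite (Qidx n K)"
  by (rule finite_subset[OF _ finite_lists_length_eq[of "{0..K}" n]])
     (auto simp: Qidx_def in_set_conv_nth)

definition Bidx_slot :: "nat \<Rightarrow> (nat \<Rightarrow> nat) \<Rightarrow> nat list \<Rightarrow> nat set" where
  "Bidx_slot p m a = {x. 1 \<le> x \<and> (2 \<le> p \<longrightarrow> x \<le> a!(p-2) + m p)}"

lemma append_Cons_in_Bidx_iff:
  assumes p: "1 \<le> p" "p \<le> N" and m: "\<forall>i>p+1. m i = 0"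
    and a: "length a = p-1" and b: "length b = N-p"
  shows "a @ x # b \<in> Bidx N m \<longleftrightarrow>
           a \<in> Bidx (p-1) m \<and> x \<in> Bidx_slot p m a \<and> b \<in> Qidx (N-p) (x + m (p+1))"
proof -
  let ?k = "a @ x # b"
  have nth_a: "?k!i = a!i" if "i < p-1" for i
    using a that by (simp add: nth_append)
  have nth_x: "?k!(p-1) = x"
    using a by (simp add: nth_append)
  have nth_b: "?k!(p+t) = b!t" for t
  proof -
    have "\<not> p + t < length a" "p + t - length a = Suc t"
      using a p by auto
    then show ?thesis
      by (simp add: nth_append)
  qed
  let ?P = "\<lambda>i. 1 \<le> ?k!i \<and> (0 < i \<longrightarrow> ?k!i \<le> ?k!(i-1) + m (i+1))"
  have "(\<forall>i<N. ?P i) \<longleftrightarrow> (\<forall>i<p-1. ?P i) \<and> ?P (p-1) \<and> (\<forall>t<N-p. ?P (p+t))"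
    using all_less_split[of "p-1" N ?P] p by simp
  also have "(\<forall>i<p-1. ?P i) \<longleftrightarrow> (\<forall>i<p-1. 1 \<le> a!i \<and> (0 < i \<longrightarrow> a!i \<le> a!(i-1) + m (i+1)))"
    by (auto simp: nth_a)
  also have "?P (p-1) \<longleftrightarrow> 1 \<le> x \<and> (0 < p-1 \<longrightarrow> x \<le> ?k!(p-1-1) + m (p-1+1))"
    by (simp only: nth_x)
  also have "\<dots> \<longleftrightarrow> x \<in> Bidx_slot p m a"
  proof (cases "2 \<le> p")
    case True
    then have "p-1-1 = p-2" "p-2 < p-1" "p-1+1 = p"
      by auto
    then show ?thesis
      using True by (simp add: nth_a Bidx_slot_def)
  qed (use p in \<open>auto simp: Bidx_slot_def\<close>)
  also have "(\<forall>t<N-p. ?P (p+t)) \<longleftrightarrow> (\<forall>t<N-p. 1 \<le> b!t \<and> b!t \<le> (if t = 0 then x + m (p+1) else b!(t-1)))"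
  proof -
    have "?P (p+t) \<longleftrightarrow> 1 \<le> b!t \<and> b!t \<le> (if t = 0 then x + m (p+1) else b!(t-1))" for t
      using p m nth_x nth_b[of t] nth_b[of "t-1"] by (cases t) auto
    then show ?thesis
      by simp
  qed
  finally show ?thesis
    using a b p unfolding Bidx_iff Qidx_iff by auto
qed

section \<open>Absolute convergence\<close>

lemma Bidx_nth_le:
  assumes k: "k \<in> Bidx r m" and i: "i < r"
  shows "k!i \<le> k!0 + (\<Sum>l=1..r. m l)"
proof -
  have "k!i \<le> k!0 + (\<Sum>l=2..i+1. m l)"
    using i
  proof (induction i)
    case (Suc i)
    have "\<forall>i<r. 0 < i \<longrightarrow> k!i \<le> k!(i-1) + m (i+1)"
      using k by (simp add: Bidx_iff)
    then have "k!(i+1) \<le> k!i + m (i+2)"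
      using Suc.prems by (auto dest: spec[of _ "i+1"])
    with Suc show ?case
      by (simp add: sum.cl_ivl_Suc)
  qed simp
  also have "(\<Sum>l=2..i+1. m l) \<le> (\<Sum>l=1..r. m l)"
    by (rule sum_mono2) (use i in auto)
  finally show ?thesis
    by simp
qed

lemma finite_Bidx_head: "finite {k \<in> Bidx r m. k!0 = n}"
  and card_Bidx_head_le: "card {k \<in> Bidx r m. k!0 = n} \<le> (n + (\<Sum>l=1..r. m l) + 1) ^ r"
proof -
  let ?L = "{xs. set xs \<subseteq> {0..n + (\<Sum>l=1..r. m l)} \<and> length xs = r}"
  have sub: "{k \<in> Bidx r m. k!0 = n} \<subseteq> ?L"
  proof safe
    fix k y assume k: "k \<in> Bidx r m" and y: "y \<in> set k"
    then obtain i where "i < r" "y = k!i"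
      by (auto simp: Bidx_iff in_set_conv_nth)
    then show "y \<in> {0..k!0 + (\<Sum>l=1..r. m l)}"
      using Bidx_nth_le[OF k] by auto
  qed (simp add: Bidx_iff)
  then show "finite {k \<in> Bidx r m. k!0 = n}"
    by (rule finite_subset) (simp add: finite_lists_length_eq)
  have "card {k \<in> Bidx r m. k!0 = n} \<le> card ?L"
    by (rule card_mono[OF finite_lists_length_eq sub]) simp
  then show "card {k \<in> Bidx r m. k!0 = n} \<le> (n + (\<Sum>l=1..r. m l) + 1) ^ r"
    by (simp add: card_lists_length_eq)
qed

lemma norm_B_summand_le:
  assumes k: "k \<in> Bidx r m" and r: "1 \<le> r"
    and w1: "1 < norm (w 1)" and w: "\<forall>i. 1 \<le> i \<and> i \<le> r \<longrightarrow> 1 \<le> norm (w i)"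
  shows "norm (B_summand r s j w k)
           \<le> (real (k!0) + real ((\<Sum>l=1..r. m l) + (\<Sum>l=1..r. j l))) ^ (\<Sum>i=1..r. nat \<bar>s i\<bar>)
             / norm (w 1) ^ (k!0)"
proof -
  define b where "b = real (k!0) + real ((\<Sum>l=1..r. m l) + (\<Sum>l=1..r. j l))"
  have factor_le: "norm (w i powi (- int (k!(i-1))) * of_nat (k!(i-1) + j i) powi (- s i))
      \<le> (if i = 1 then inverse (norm (w 1) ^ (k!0)) else 1) * b ^ nat \<bar>s i\<bar>"
    if i: "i \<in> {1..r}" for i
  proof -
    have "k!(i-1) \<le> k!0 + (\<Sum>l=1..r. m l)" "j i \<le> (\<Sum>l=1..r. j l)"
      using i Bidx_nth_le[OF k, of "i-1"] by (auto intro: member_le_sum)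
    then have "real (k!(i-1) + j i) \<le> b"
      unfolding b_def by linarith
    moreover have "1 \<le> k!(i-1)"
      using k i by (auto simp: Bidx_iff)
    ultimately have "norm (of_nat (k!(i-1) + j i) powi (- s i) :: complex) \<le> b ^ nat \<bar>s i\<bar>"
      unfolding norm_power_int norm_of_nat by (intro of_nat_powi_le_power) auto
    moreover have "norm (w i powi (- int (k!(i-1)))) \<le> (if i = 1 then inverse (norm (w 1) ^ (k!0)) else 1)"
      using w[rule_format, of i] i by (auto simp: power_int_minus norm_inverse norm_power inverse_le_1_iff one_le_power)
    ultimately show ?thesis
      unfolding norm_mult by (intro mult_mono) auto
  qed
  have "norm (B_summand r s j w k)
      \<le> (\<Prod>i=1..r. (if i = 1 then inverse (norm (w 1) ^ (k!0)) else 1) * b ^ nat \<bar>s i\<bar>)"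
    unfolding B_summand_def prod_norm[symmetric] by (intro prod_mono conjI factor_le norm_ge_zero)
  also have "\<dots> = b ^ (\<Sum>i=1..r. nat \<bar>s i\<bar>) / norm (w 1) ^ (k!0)"
    using r by (simp add: prod.distrib power_sum prod.delta field_simps)
  finally show ?thesis
    unfolding b_def .
qed

lemma summable_on_Bidx_B_summand:
  assumes r: "1 \<le> r"
    and w1: "1 < norm (w 1)" and w: "\<forall>i. 1 \<le> i \<and> i \<le> r \<longrightarrow> 1 \<le> norm (w i)"
  shows "B_summand r s j w summable_on Bidx r m"
proof (rule summable_on_by_fibres)
  define C where "C = (\<Sum>l=1..r. m l) + (\<Sum>l=1..r. j l)"
  define D where "D = (\<Sum>i=1..r. nat \<bar>s i\<bar>)"
  define g where "g n = (real n + real C) ^ D / norm (w 1) ^ n" for n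
  show "norm (B_summand r s j w k) \<le> g (k!0)" if "k \<in> Bidx r m" for k
    using norm_B_summand_le[OF that r w1 w] unfolding g_def C_def D_def by simp
  show "finite {k \<in> Bidx r m. k!0 = n}" for n
    by (rule finite_Bidx_head)
  have g_nonneg: "0 \<le> g n" for n
    unfolding g_def by simp
  have le: "norm (real (card {k \<in> Bidx r m. k!0 = n}) * g n) \<le> (real n + (real C + 1)) ^ (r + D) / norm (w 1) ^ n"
    for n
  proof -
    have "card {k \<in> Bidx r m. k!0 = n} \<le> (n + C + 1) ^ r"
      using card_Bidx_head_le[of r m n] power_mono[of "n + (\<Sum>l=1..r. m l) + 1" "n + C + 1" r]
      unfolding C_def by linarith
    then have card_le: "real (card {k \<in> Bidx r m. k!0 = n}) \<le> (real n + (real C + 1)) ^ r"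
      by (metis of_nat_le_iff of_nat_power of_nat_add of_nat_1 add.assoc)
    have "norm (real (card {k \<in> Bidx r m. k!0 = n}) * g n) \<le> (real n + (real C + 1)) ^ r * g n"
      using mult_right_mono[OF card_le g_nonneg] g_nonneg by simp
    also have "\<dots> \<le> (real n + (real C + 1)) ^ r * ((real n + (real C + 1)) ^ D / norm (w 1) ^ n)"
      unfolding g_def by (intro mult_left_mono divide_right_mono power_mono) auto
    also have "\<dots> = (real n + (real C + 1)) ^ (r + D) / norm (w 1) ^ n"
      by (simp add: power_add)
    finally show ?thesis .
  qed
  have "summable (\<lambda>n. (real n + (real C + 1)) ^ (r + D) / norm (w 1) ^ n)"
    using w1 by (intro summable_poly_div_power) auto
  then show "summable (\<lambda>n. real (card {k \<in> Bidx r m. k!0 = n}) * g n)"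
    using le by (rule summable_comparison_test')
qed

section \<open>Summing out the indices beyond position \<open>p\<close>\<close>

lemma bij_betw_append_Cons_Bidx:
  assumes p: "1 \<le> p" "p \<le> N" and m: "\<forall>i>p+1. m i = 0"
  shows "bij_betw (\<lambda>((a, x), b). a @ x # b)
           (Sigma (Sigma (Bidx (p-1) m) (Bidx_slot p m)) (\<lambda>(a, x). Qidx (N-p) (x + m (p+1))))
           (Bidx N m)"
proof (rule bij_betwI')
  fix u v
  assume "u \<in> Sigma (Sigma (Bidx (p-1) m) (Bidx_slot p m)) (\<lambda>(a, x). Qidx (N-p) (x + m (p+1)))"
    and "v \<in> Sigma (Sigma (Bidx (p-1) m) (Bidx_slot p m)) (\<lambda>(a, x). Qidx (N-p) (x + m (p+1)))"
  then show "((\<lambda>((a, x), b). a @ x # b) u = (\<lambda>((a, x), b). a @ x # b) v) = (u = v)"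
    by (auto simp: Bidx_iff append_eq_append_conv)
next
  fix u
  assume "u \<in> Sigma (Sigma (Bidx (p-1) m) (Bidx_slot p m)) (\<lambda>(a, x). Qidx (N-p) (x + m (p+1)))"
  then obtain a x b where "u = ((a, x), b)" "a \<in> Bidx (p-1) m" "x \<in> Bidx_slot p m a"
    "b \<in> Qidx (N-p) (x + m (p+1))"
    by auto
  moreover from this have "length a = p-1" "length b = N-p"
    by (simp_all add: Bidx_iff Qidx_iff)
  ultimately show "(\<lambda>((a, x), b). a @ x # b) u \<in> Bidx N m"
    using append_Cons_in_Bidx_iff[OF p m] by simp
next
  fix k assume k: "k \<in> Bidx N m"
  define a x b where "a = take (p-1) k" and "x = k!(p-1)" and "b = drop p k"
  have "length k = N"
    using k by (simp add: Bidx_iff)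
  then have "k = a @ x # b" and ab: "length a = p-1" "length b = N-p"
    unfolding a_def x_def b_def using id_take_nth_drop[of "p-1" k] p by auto
  with k have "a \<in> Bidx (p-1) m \<and> x \<in> Bidx_slot p m a \<and> b \<in> Qidx (N-p) (x + m (p+1))"
    using append_Cons_in_Bidx_iff[OF p m ab] by simp
  with \<open>k = a @ x # b\<close> show "\<exists>u \<in> Sigma (Sigma (Bidx (p-1) m) (Bidx_slot p m)) (\<lambda>(a, x). Qidx (N-p) (x + m (p+1))).
      k = (\<lambda>((a, x), b). a @ x # b) u"
    by (intro bexI[of _ "((a, x), b)"]) auto
qed

lemma B_summand_append_Cons:
  assumes p: "1 \<le> p" "p \<le> N" and j: "\<forall>i>p. j i = 0"
    and a: "length a = p-1" and b: "length b = N-p"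
  shows "B_summand N s j z (a @ x # b) =
           B_summand (p-1) s j z a * (z p powi (- int x) * of_nat (x + j p) powi (- s p))
           * (\<Prod>i=p+1..N. z i powi (- int (b!(i-(p+1)))) * of_nat (b!(i-(p+1))) powi (- s i))"
proof -
  define f where "f i = z i powi (- int ((a @ x # b)!(i-1))) * of_nat ((a @ x # b)!(i-1) + j i) powi (- s i)" for i
  have "B_summand N s j z (a @ x # b) = prod f {1..p-1} * prod f {p..N}"
    unfolding B_summand_def f_def using prod.ub_add_nat[of 1 "p-1" _ "N-(p-1)"] p by simp
  also have "prod f {p..N} = f p * prod f {p+1..N}"
    using p by (simp add: prod.atLeast_Suc_atMost)
  also have "prod f {1..p-1} = B_summand (p-1) s j z a"
    unfolding B_summand_def f_def using a by (intro prod.cong) (auto simp: nth_append)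
  also have "f p = z p powi (- int x) * of_nat (x + j p) powi (- s p)"
    unfolding f_def using a p by (simp add: nth_append)
  also have "prod f {p+1..N} = (\<Prod>i=p+1..N. z i powi (- int (b!(i-(p+1)))) * of_nat (b!(i-(p+1))) powi (- s i))"
  proof (rule prod.cong)
    fix i assume i: "i \<in> {p+1..N}"
    then have "\<not> i - 1 < length a" "i - 1 - length a = Suc (i-(p+1))"
      using a p by auto
    then show "f i = z i powi (- int (b!(i-(p+1)))) * of_nat (b!(i-(p+1))) powi (- s i)"
      unfolding f_def using j i by (simp add: nth_append)
  qed simp
  finally show ?thesis
    by (simp add: mult.assoc)
qed

lemma
  fixes s :: "nat \<Rightarrow> int"
  assumes p: "1 \<le> p" "p \<le> N" and m: "\<forall>i>p+1. m i = 0" and j: "\<forall>i>p. j i = 0"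
    and z1: "1 < norm (z 1)" and z: "\<forall>i. 1 \<le> i \<and> i \<le> N \<longrightarrow> 1 \<le> norm (z i)"
  defines "F \<equiv> \<lambda>(a, x). B_summand (p-1) s j z a * (z p powi (- int x) * of_nat (x + j p) powi (- s p))
                         * Q N (p+1) s z (x + m (p+1))"
  shows summable_on_Sigma_Bidx_slot: "F summable_on Sigma (Bidx (p-1) m) (Bidx_slot p m)"
    and B_eq_infsum_Sigma_Bidx_slot: "B N s m j z = infsum F (Sigma (Bidx (p-1) m) (Bidx_slot p m))"
proof -
  let ?g = "\<lambda>(a, x). \<lambda>b. B_summand N s j z (a @ x # b)"
  let ?T = "\<lambda>(a, x). Qidx (N-p) (x + m (p+1))"
  note bij = bij_betw_append_Cons_Bidx[OF p m]
  have "B_summand N s j z summable_on Bidx N m"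
    using p z1 z by (intro summable_on_Bidx_B_summand) auto
  then have summable: "(\<lambda>(ax, b). ?g ax b) summable_on Sigma (Sigma (Bidx (p-1) m) (Bidx_slot p m)) ?T"
    using summable_on_reindex_bij_betw[OF bij, of "B_summand N s j z"] by (simp add: case_prod_unfold)
  have inner: "infsum (?g ax) (?T ax) = F ax" if "ax \<in> Sigma (Bidx (p-1) m) (Bidx_slot p m)" for ax
  proof -
    obtain a x where ax: "ax = (a, x)"
      by (cases ax)
    with that have a: "length a = p-1"
      by (simp add: Bidx_iff)
    have "infsum (?g ax) (?T ax) = (\<Sum>b\<in>Qidx (N-p) (x + m (p+1)). B_summand N s j z (a @ x # b))"
      by (simp add: ax finite_Qidx)
    also have "\<dots> = F ax"
      unfolding ax F_def Q_def using B_summand_append_Cons[OF p j a]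
      by (simp add: sum_distrib_left Qidx_def)
    finally show ?thesis .
  qed
  have "B N s m j z = infsum (\<lambda>(ax, b). ?g ax b) (Sigma (Sigma (Bidx (p-1) m) (Bidx_slot p m)) ?T)"
    unfolding B_eq_infsum_B_summand using infsum_reindex_bij_betw[OF bij, of "B_summand N s j z"]
    by (simp add: case_prod_unfold)
  also have "\<dots> = infsum (\<lambda>ax. infsum (?g ax) (?T ax)) (Sigma (Bidx (p-1) m) (Bidx_slot p m))"
    by (rule infsum_Sigma'_banach[OF summable, symmetric])
  also have "\<dots> = infsum F (Sigma (Bidx (p-1) m) (Bidx_slot p m))"
    by (rule infsum_cong) (rule inner)
  finally show "B N s m j z = infsum F (Sigma (Bidx (p-1) m) (Bidx_slot p m))" .
  show "F summable_on Sigma (Bidx (p-1) m) (Bidx_slot p m)"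
    using summable_on_Sigma_banach[OF summable] by (rule summable_on_cong[THEN iffD1, rotated]) (rule inner)
qed

definition Q_term :: "nat \<Rightarrow> nat \<Rightarrow> (nat \<Rightarrow> int) \<Rightarrow> (nat \<Rightarrow> complex) \<Rightarrow> nat \<Rightarrow> complex" where
  "Q_term N p s z x = z p powi (- int x) * of_nat x powi (- s p) * Q N (p+1) s z x"

lemma bij_betw_Cons_Qidx: "bij_betw (\<lambda>(x, b). x # b) (Sigma {1..K} (Qidx n)) (Qidx (Suc n) K)"
proof (rule bij_betwI')
  fix k assume "k \<in> Qidx (Suc n) K"
  moreover from this obtain x b where "k = x # b"
    by (cases k) (auto simp: Qidx_iff)
  ultimately show "\<exists>u \<in> Sigma {1..K} (Qidx n). k = (\<lambda>(x, b). x # b) u"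
    using Cons_in_Qidx_Suc_iff by auto
qed (auto simp: Cons_in_Qidx_Suc_iff)

lemma Q_eq_sum_Q_term:
  assumes "1 \<le> p" "p \<le> N"
  shows "Q N p s z K = (\<Sum>x=1..K. Q_term N p s z x)"
proof -
  define h where "h k = (\<Prod>i=p..N. z i powi (- int (k!(i-p))) * of_nat (k!(i-p)) powi (- s i))" for k
  have h_Cons: "h (x # b) = z p powi (- int x) * of_nat x powi (- s p) *
      (\<Prod>i=p+1..N. z i powi (- int (b!(i-(p+1)))) * of_nat (b!(i-(p+1))) powi (- s i))" for x b
  proof -
    have "(\<Prod>i=Suc p..N. z i powi (- int ((x#b)!(i-p))) * of_nat ((x#b)!(i-p)) powi (- s i))
        = (\<Prod>i=p+1..N. z i powi (- int (b!(i-(p+1)))) * of_nat (b!(i-(p+1))) powi (- s i))"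
      by (intro prod.cong) (auto simp: Suc_diff_Suc)
    then show ?thesis
      unfolding h_def using assms by (simp add: prod.atLeast_Suc_atMost)
  qed
  have "Q N p s z K = sum h (Qidx (Suc (N-p)) K)"
    unfolding Q_def h_def using assms by (simp add: Suc_diff_le)
  also have "\<dots> = (\<Sum>(x, b)\<in>Sigma {1..K} (Qidx (N-p)). h (x # b))"
    using sum.reindex_bij_betw[OF bij_betw_Cons_Qidx, of h] by (simp add: case_prod_unfold)
  also have "\<dots> = (\<Sum>x=1..K. \<Sum>b\<in>Qidx (N-p) x. h (x # b))"
    by (simp add: sum.Sigma finite_Qidx)
  also have "\<dots> = (\<Sum>x=1..K. Q_term N p s z x)"
    unfolding h_Cons Q_term_def Q_def by (simp add: sum_distrib_left)
  finally show ?thesis .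
qed

lemma Q_term_eq_diff:
  assumes "1 \<le> p" "p \<le> N" "1 \<le> K"
  shows "Q_term N p s z K = Q N p s z K - Q N p s z (K-1)"
  using Q_eq_sum_Q_term[OF assms(1,2), of s z K] Q_eq_sum_Q_term[OF assms(1,2), of s z "K-1"] assms(3)
  by (cases K) (simp_all add: sum.cl_ivl_Suc)

lemma sum_Q_term_shift:
  assumes "1 \<le> p" "p \<le> N"
  shows "(\<Sum>x=1..U. Q_term N p s z (x + d)) = Q N p s z (d + U) - Q N p s z d"
proof -
  have "(\<Sum>x=1..d + U. Q_term N p s z x) = (\<Sum>x=1..d. Q_term N p s z x) + (\<Sum>x=d+1..d+U. Q_term N p s z x)"
    by (rule sum.ub_add_nat) simp
  moreover have "(\<Sum>x=d+1..d+U. Q_term N p s z x) = (\<Sum>x=1..U. Q_term N p s z (x + d))"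
    using sum.shift_bounds_cl_nat_ivl[of "Q_term N p s z" 1 d U] by (simp add: add.commute)
  ultimately show ?thesis
    unfolding Q_eq_sum_Q_term[OF assms] by simp
qed

lemma powi_shift_Q_term:
  assumes "z p \<noteq> 0"
  shows "z p powi (- int x) * of_nat (x + d) powi (- s p) * Q N (p+1) s z (x + d)
           = z p ^ d * Q_term N p s z (x + d)"
proof -
  have "z p ^ d * z p powi (- int (x + d)) = z p powi (- int x)"
    using assms by (simp add: power_int_add[symmetric] power_int_of_nat[symmetric] del: power_int_of_nat)
  then show ?thesis
    unfolding Q_term_def by (simp add: mult.assoc[symmetric])
qed

lemma
  fixes s :: "nat \<Rightarrow> int"
  assumes N: "1 \<le> N" and m: "\<forall>i>2. m i = 0" "m 2 = j 1" and j: "\<forall>i>1. j i = 0"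
    and z1: "1 < norm (z 1)" and z: "\<forall>i. 1 \<le> i \<and> i \<le> N \<longrightarrow> 1 \<le> norm (z i)"
  shows summable_on_Q_term_shift: "(\<lambda>x. Q_term N 1 s z (x + j 1)) summable_on {1..}"
    and B_eq_infsum_Q_term_shift: "B N s m j z = z 1 ^ j 1 * infsum (\<lambda>x. Q_term N 1 s z (x + j 1)) {1..}"
proof -
  have bij: "bij_betw (\<lambda>x. ([], x)) {1..} (Sigma (Bidx 0 m) (Bidx_slot 1 m))"
    by (rule bij_betwI') (auto simp: Bidx_iff Bidx_slot_def)
  have z10: "z 1 \<noteq> 0"
    using z1 by auto
  define F where "F = (\<lambda>(a, x). B_summand (1-1) s j z a * (z 1 powi (- int x) * of_nat (x + j 1) powi (- s 1))
                                * Q N (1+1) s z (x + m (1+1)))"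
  have F: "F ([], x) = z 1 ^ j 1 * Q_term N 1 s z (x + j 1)" for x
    using powi_shift_Q_term[where z = z and p = 1, OF z10] m(2) by (simp add: F_def B_summand_def numeral_2_eq_2)
  have "F summable_on Sigma (Bidx (1-1) m) (Bidx_slot 1 m)"
    unfolding F_def by (rule summable_on_Sigma_Bidx_slot) (use N m j z1 z in auto)
  then have "(\<lambda>x. z 1 ^ j 1 * Q_term N 1 s z (x + j 1)) summable_on {1..}"
    using summable_on_reindex_bij_betw[OF bij, of F] by (simp add: F)
  then show "(\<lambda>x. Q_term N 1 s z (x + j 1)) summable_on {1..}"
    using z10 by (subst (asm) summable_on_cmult_right') auto
  have "B N s m j z = infsum F (Sigma (Bidx (1-1) m) (Bidx_slot 1 m))"
    unfolding F_def by (rule B_eq_infsum_Sigma_Bidx_slot) (use N m j z1 z in auto)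
  also have "\<dots> = infsum (\<lambda>x. z 1 ^ j 1 * Q_term N 1 s z (x + j 1)) {1..}"
    using infsum_reindex_bij_betw[OF bij, of F] by (simp add: F)
  finally show "B N s m j z = z 1 ^ j 1 * infsum (\<lambda>x. Q_term N 1 s z (x + j 1)) {1..}"
    by (simp add: infsum_cmult_right')
qed

lemma
  fixes s :: "nat \<Rightarrow> int"
  assumes p: "2 \<le> p" "p \<le> N" and m: "\<forall>i>p+1. m i = 0" "m (p+1) = j p" and j: "\<forall>i>p. j i = 0"
    and z1: "1 < norm (z 1)" and z: "\<forall>i. 1 \<le> i \<and> i \<le> N \<longrightarrow> 1 \<le> norm (z i)"
  shows summable_on_B_summand_Q_diff:
      "(\<lambda>a. B_summand (p-1) s j z a * (Q N p s z (a!(p-2) + m p + j p) - Q N p s z (j p)))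
         summable_on Bidx (p-1) m"
    and B_eq_infsum_B_summand_Q_diff:
      "B N s m j z = z p ^ j p *
         infsum (\<lambda>a. B_summand (p-1) s j z a * (Q N p s z (a!(p-2) + m p + j p) - Q N p s z (j p)))
           (Bidx (p-1) m)"
proof -
  let ?G = "\<lambda>a. B_summand (p-1) s j z a * (Q N p s z (a!(p-2) + m p + j p) - Q N p s z (j p))"
  define f where "f a x = B_summand (p-1) s j z a * (z p powi (- int x) * of_nat (x + j p) powi (- s p))
                           * Q N (p+1) s z (x + m (p+1))" for a x
  have p1: "1 \<le> p"
    using p by simp
  have zp: "z p \<noteq> 0"
    using z[rule_format, of p] p by auto
  have summable: "(\<lambda>(a, x). f a x) summable_on Sigma (Bidx (p-1) m) (Bidx_slot p m)"
    unfolding f_def using summable_on_Sigma_Bidx_slot[OF p1 p(2) m(1) j z1 z] by simp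
  have inner: "infsum (f a) (Bidx_slot p m a) = z p ^ j p * ?G a" for a
  proof -
    have "Bidx_slot p m a = {1..a!(p-2) + m p}"
      using p by (auto simp: Bidx_slot_def)
    moreover have "f a x = z p ^ j p * (B_summand (p-1) s j z a * Q_term N p s z (x + j p))" for x
      unfolding f_def m(2) using powi_shift_Q_term[where z = z and p = p, OF zp] by (simp add: ac_simps)
    ultimately have "infsum (f a) (Bidx_slot p m a)
        = z p ^ j p * (B_summand (p-1) s j z a * (\<Sum>x=1..a!(p-2) + m p. Q_term N p s z (x + j p)))"
      by (simp add: sum_distrib_left)
    also have "\<dots> = z p ^ j p * ?G a"
      using sum_Q_term_shift[OF p1 p(2), where U = "a!(p-2) + m p" and d = "j p"] by (simp add: ac_simps)
    finally show ?thesis .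
  qed
  have "(\<lambda>a. z p ^ j p * ?G a) summable_on Bidx (p-1) m"
    using summable_on_Sigma_banach[OF summable] unfolding inner .
  then show "?G summable_on Bidx (p-1) m"
    using zp by (subst (asm) summable_on_cmult_right') auto
  have "B N s m j z = infsum (\<lambda>(a, x). f a x) (Sigma (Bidx (p-1) m) (Bidx_slot p m))"
    unfolding f_def using B_eq_infsum_Sigma_Bidx_slot[OF p1 p(2) m(1) j z1 z] by simp
  also have "\<dots> = infsum (\<lambda>a. z p ^ j p * ?G a) (Bidx (p-1) m)"
    unfolding infsum_Sigma'_banach[OF summable, symmetric] inner ..
  finally show "B N s m j z = z p ^ j p * infsum ?G (Bidx (p-1) m)"
    by (simp add: infsum_cmult_right')
qed

section \<open>Shifts at positions \<open>1\<close> and \<open>p\<close>\<close>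

lemma La_inverse_eq_B: "La N s (\<lambda>i. 1 / z i) = B N s (\<lambda>_. 0) (\<lambda>_. 0) z"
proof -
  have shift: "(\<forall>i. i+1 < N \<longrightarrow> P (i+1) i) \<longleftrightarrow> (\<forall>i<N. 0 < i \<longrightarrow> P i (i-1))" for P
  proof (intro iffI allI impI)
    fix i assume H: "\<forall>i. i+1 < N \<longrightarrow> P (i+1) i" and "i < N" "0 < i"
    then show "P i (i-1)"
      using H[rule_format, of "i-1"] by simp
  next
    fix i assume H: "\<forall>i<N. 0 < i \<longrightarrow> P i (i-1)" and "i+1 < N"
    then show "P (i+1) i"
      using H[rule_format, of "i+1"] by simp
  qed
  have "k \<in> Laidx N \<longleftrightarrow> k \<in> Bidx N (\<lambda>_. 0)" for k
    using shift[of "\<lambda>a b. k!a \<le> k!b"] unfolding Laidx_def Bidx_iff by auto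
  then have "Laidx N = Bidx N (\<lambda>_. 0)"
    by blast
  then show ?thesis
    unfolding La_def B_def by (simp add: power_int_minus power_one_over divide_inverse mult.commute power_inverse)
qed

lemma B_head_shift_eq_La:
  fixes s :: "nat \<Rightarrow> int"
  assumes N: "1 \<le> N" and z1: "1 < norm (z 1)" and z: "\<forall>i. 1 \<le> i \<and> i \<le> N \<longrightarrow> 1 \<le> norm (z i)"
  shows "B N s (\<lambda>i. if i = 2 then j1 else 0) (\<lambda>i. if i = 1 then j1 else 0) z
           = z 1 ^ j1 * La N s (\<lambda>i. 1 / z i) - z 1 ^ j1 * Q N 1 s z j1"
proof -
  have summable: "Q_term N 1 s z summable_on {1..}"
    using summable_on_Q_term_shift[of N "\<lambda>_. 0" "\<lambda>_. 0" z s] N z1 z by simp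
  have La: "La N s (\<lambda>i. 1 / z i) = infsum (Q_term N 1 s z) {1..}"
    unfolding La_inverse_eq_B using B_eq_infsum_Q_term_shift[of N "\<lambda>_. 0" "\<lambda>_. 0" z s] N z1 z by simp
  have "{1..} = {1..j1} \<union> {j1+1..}"
    by auto
  then have "infsum (Q_term N 1 s z) {1..} = Q N 1 s z j1 + infsum (Q_term N 1 s z) {j1+1..}"
    using N summable by (simp add: infsum_Un_disjoint summable_on_subset_banach Q_eq_sum_Q_term)
  moreover have "bij_betw (\<lambda>x. x + j1) {1..} {j1+1..}"
    by (rule bij_betwI[where g = "\<lambda>y. y - j1"]) auto
  then have "infsum (\<lambda>x. Q_term N 1 s z (x + j1)) {1..} = infsum (Q_term N 1 s z) {j1+1..}"
    by (rule infsum_reindex_bij_betw)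
  moreover have "B N s (\<lambda>i. if i = 2 then j1 else 0) (\<lambda>i. if i = 1 then j1 else 0) z
      = z 1 ^ j1 * infsum (\<lambda>x. Q_term N 1 s z (x + j1)) {1..}"
    using B_eq_infsum_Q_term_shift[of N "\<lambda>i. if i = 2 then j1 else 0" "\<lambda>i. if i = 1 then j1 else 0" z s] N z1 z
    by simp
  ultimately show ?thesis
    unfolding La by (simp add: algebra_simps)
qed

text \<open>At \<open>k = j_{p-1}\<close> this is the series \<open>B_N[s; m'; j']\<close> of part (i).\<close>

definition B_prefix ::
    "nat \<Rightarrow> nat \<Rightarrow> (nat \<Rightarrow> int) \<Rightarrow> (nat \<Rightarrow> nat) \<Rightarrow> (nat \<Rightarrow> nat) \<Rightarrow> (nat \<Rightarrow> complex) \<Rightarrow> nat \<Rightarrow> complex" where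
  "B_prefix N p s m j z k = B N s (\<lambda>i. if i \<le> p - 1 then m i else if i = p then k else 0)
                                 (\<lambda>i. if i \<le> p - 1 then j i else 0) z"

lemma
  fixes s :: "nat \<Rightarrow> int"
  assumes p: "2 \<le> p" "p \<le> N"
    and z1: "1 < norm (z 1)" and z: "\<forall>i. 1 \<le> i \<and> i \<le> N \<longrightarrow> 1 \<le> norm (z i)"
  shows summable_on_B_summand_Q:
      "(\<lambda>a. B_summand (p-1) s j z a * Q N p s z (a!(p-2) + k)) summable_on Bidx (p-1) m"
    and B_prefix_eq_infsum:
      "B_prefix N p s m j z k = infsum (\<lambda>a. B_summand (p-1) s j z a * Q N p s z (a!(p-2) + k)) (Bidx (p-1) m)"
proof -
  define m' where "m' i = (if i \<le> p - 1 then m i else if i = p then k else 0)" for i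
  define j' where "j' i = (if i \<le> p - 1 then j i else 0)" for i
  have "Bidx (p-1) m' = Bidx (p-1) m"
    unfolding m'_def by (rule Bidx_cong) simp
  moreover have "B_summand (p-1) s j' z = B_summand (p-1) s j z"
    unfolding j'_def by (rule B_summand_cong) simp
  moreover have "m' p = k" "j' p = 0" "m' (p+1) = j' p" "\<forall>i>p+1. m' i = 0" "\<forall>i>p. j' i = 0"
    using p by (auto simp: m'_def j'_def)
  moreover have "Q N p s z 0 = 0"
    using p by (simp add: Q_eq_sum_Q_term)
  ultimately show "(\<lambda>a. B_summand (p-1) s j z a * Q N p s z (a!(p-2) + k)) summable_on Bidx (p-1) m"
    and "B_prefix N p s m j z k = infsum (\<lambda>a. B_summand (p-1) s j z a * Q N p s z (a!(p-2) + k)) (Bidx (p-1) m)"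
    using summable_on_B_summand_Q_diff[of p N m' j' z s] B_eq_infsum_B_summand_Q_diff[of p N m' j' z s] p z1 z
    unfolding B_prefix_def m'_def[symmetric] j'_def[symmetric] by simp_all
qed

lemma B_shifted_eq_B_prefix:
  fixes s :: "nat \<Rightarrow> int"
  assumes p: "2 \<le> p" "p \<le> N"
    and z1: "1 < norm (z 1)" and z: "\<forall>i. 1 \<le> i \<and> i \<le> N \<longrightarrow> 1 \<le> norm (z i)"
  shows "B N s (\<lambda>i. if i \<le> p then m i else if i = p + 1 then j p else 0) (\<lambda>i. if i \<le> p then j i else 0) z
           = z p ^ j p * (B_prefix N p s m j z (j p + m p) - Q N p s z (j p) * B (p - 1) s m j z)"
proof -
  define m' where "m' i = (if i \<le> p then m i else if i = p + 1 then j p else 0)" for i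
  define j' where "j' i = (if i \<le> p then j i else 0)" for i
  let ?pre = "B_summand (p-1) s j z"
  have "Bidx (p-1) m' = Bidx (p-1) m"
    unfolding m'_def by (rule Bidx_cong) auto
  moreover have "B_summand (p-1) s j' z = ?pre"
    unfolding j'_def by (rule B_summand_cong) auto
  moreover have "m' p = m p" "j' p = j p" "m' (p+1) = j' p" "\<forall>i>p+1. m' i = 0" "\<forall>i>p. j' i = 0"
    by (auto simp: m'_def j'_def)
  ultimately have "B N s m' j' z
      = z p ^ j p * infsum (\<lambda>a. ?pre a * Q N p s z (a!(p-2) + (j p + m p)) - Q N p s z (j p) * ?pre a) (Bidx (p-1) m)"
    using B_eq_infsum_B_summand_Q_diff[of p N m' j' z s] p z1 z by (simp add: algebra_simps)
  also have "\<dots> = z p ^ j p * (B_prefix N p s m j z (j p + m p) - Q N p s z (j p) * B (p - 1) s m j z)"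
  proof -
    have "?pre summable_on Bidx (p-1) m"
      using p z1 z by (intro summable_on_Bidx_B_summand) auto
    then show ?thesis
      using summable_on_B_summand_Q[OF p z1 z]
      by (simp add: infsum_diff summable_on_cmult_right infsum_cmult_right' B_prefix_eq_infsum[OF p z1 z]
                    B_eq_infsum_B_summand)
  qed
  finally show ?thesis
    unfolding m'_def j'_def .
qed

lemma R_summand_eq:
  assumes "2 \<le> p" "z p \<noteq> 0"
  shows "(\<Prod>i=1..p-2. z i powi (- int (a!(i-1)))) * (z (p-1) * z p) powi (- int (a!(p-2)))
           * (\<Prod>i=1..p-1. of_nat (a!(i-1) + j i) powi (- s i))
           * of_nat (a!(p-2) + k) powi (- s p) * Q N (p+1) s z (a!(p-2) + k)
         = z p powi int k * (B_summand (p-1) s j z a * Q_term N p s z (a!(p-2) + k))"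
proof -
  have "p - 1 = Suc (p-2)"
    using assms by simp
  then have "B_summand (p-1) s j z a = (\<Prod>i=1..p-2. z i powi (- int (a!(i-1)))) * z (p-1) powi (- int (a!(p-2)))
      * (\<Prod>i=1..p-1. of_nat (a!(i-1) + j i) powi (- s i))"
    unfolding B_summand_def prod.distrib by (simp add: prod.cl_ivl_Suc)
  moreover have "z p powi (int k + - int (a!(p-2) + k)) = z p powi int k * z p powi (- int (a!(p-2) + k))"
    using assms(2) by (intro power_int_add) simp
  then have "z p powi (- int (a!(p-2))) = z p powi int k * z p powi (- int (a!(p-2) + k))"
    by simp
  ultimately show ?thesis
    unfolding Q_term_def power_int_mult_distrib by (simp add: ac_simps)
qed

lemma R_eq_B_prefix_diff:
  fixes s :: "nat \<Rightarrow> int"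
  assumes p: "2 \<le> p" "p \<le> N" and k: "1 \<le> k"
    and z1: "1 < norm (z 1)" and z: "\<forall>i. 1 \<le> i \<and> i \<le> N \<longrightarrow> 1 \<le> norm (z i)"
  shows "R N p s m j z k = z p powi int k * (B_prefix N p s m j z k - B_prefix N p s m j z (k-1))"
proof -
  let ?pre = "B_summand (p-1) s j z"
  have zp: "z p \<noteq> 0"
    using z[rule_format, of p] p by auto
  have "Q_term N p s z (a!(p-2) + k) = Q N p s z (a!(p-2) + k) - Q N p s z (a!(p-2) + (k-1))" for a
    using Q_term_eq_diff[of p N "a!(p-2) + k" s z] p k by simp
  then have "R N p s m j z k
      = infsum (\<lambda>a. z p powi int k * (?pre a * Q N p s z (a!(p-2) + k) - ?pre a * Q N p s z (a!(p-2) + (k-1))))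
          (Bidx (p-1) m)"
    unfolding R_def R_summand_eq[where z = z and p = p, OF p(1) zp] by (simp add: right_diff_distrib)
  also have "\<dots> = z p powi int k * (B_prefix N p s m j z k - B_prefix N p s m j z (k-1))"
    using summable_on_B_summand_Q[OF p z1 z]
    by (simp add: infsum_cmult_right' infsum_diff B_prefix_eq_infsum[OF p z1 z])
  finally show ?thesis .
qed

lemma B_modulation_shift:
  fixes s :: "nat \<Rightarrow> int"
  assumes p: "2 \<le> p" "p \<le> N"
    and z1: "1 < norm (z 1)" and z: "\<forall>i. 1 \<le> i \<and> i \<le> N \<longrightarrow> 1 \<le> norm (z i)"
  shows "B N s (\<lambda>i. if i \<le> p then m i else if i = p + 1 then j p else 0)
                 (\<lambda>i. if i \<le> p then j i else 0) z
         = z p ^ (j p) * B N s (\<lambda>i. if i \<le> p - 1 then m i else if i = p then j (p - 1) else 0)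
                              (\<lambda>i. if i \<le> p - 1 then j i else 0) z
           - z p ^ (j p) * Q N p s z (j p) * B (p - 1) s m j z
           + of_int (eps (j (p - 1)) (j p + m p)) *
             (\<Sum>k = min (j (p - 1)) (j p + m p) + 1 .. max (j (p - 1)) (j p + m p).
                z p powi (int (j p) - int k) * R N p s m j z k)"
proof -
  let ?S = "B_prefix N p s m j z"
  let ?K = "{min (j (p - 1)) (j p + m p) + 1 .. max (j (p - 1)) (j p + m p)}"
  have zp: "z p \<noteq> 0"
    using z[rule_format, of p] p by auto
  have "z p powi (int (j p) - int k) * R N p s m j z k = z p ^ j p * (?S k - ?S (k-1))" if "k \<in> ?K" for k
  proof -
    have "z p powi ((int (j p) - int k) + int k) = z p powi (int (j p) - int k) * z p powi int k"
      using zp by (intro power_int_add) simp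
    then have "z p powi (int (j p) - int k) * z p powi int k = z p ^ j p"
      by simp
    then show ?thesis
      using R_eq_B_prefix_diff[OF p _ z1 z, of k] that by (simp add: mult.assoc[symmetric])
  qed
  then have "(\<Sum>k\<in>?K. z p powi (int (j p) - int k) * R N p s m j z k) = z p ^ j p * (\<Sum>k\<in>?K. ?S k - ?S (k-1))"
    by (simp add: sum_distrib_left)
  then have "of_int (eps (j (p - 1)) (j p + m p)) * (\<Sum>k\<in>?K. z p powi (int (j p) - int k) * R N p s m j z k)
      = z p ^ j p * (?S (j p + m p) - ?S (j (p - 1)))"
    using eps_telescope[of "j (p - 1)" "j p + m p" ?S] by (simp add: ac_simps)
  then show ?thesis
    unfolding B_shifted_eq_B_prefix[OF p z1 z] B_prefix_def[symmetric] by (simp add: algebra_simps)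
qed

theorem mainTheorem6:
  fixes N :: nat and s :: "nat \<Rightarrow> int" and z :: "nat \<Rightarrow> complex"
  assumes "N \<ge> 1" and "norm (z 1) > 1" and "\<forall>i. 1 \<le> i \<and> i \<le> N \<longrightarrow> norm (z i) \<ge> 1"
  shows "(\<forall>p (m :: nat \<Rightarrow> nat) (j :: nat \<Rightarrow> nat). 2 \<le> p \<and> p \<le> N \<and> m 1 = 0 \<longrightarrow>
           B N s (\<lambda>i. if i \<le> p then m i else if i = p + 1 then j p else 0)
                 (\<lambda>i. if i \<le> p then j i else 0) z
         = z p ^ (j p) * B N s (\<lambda>i. if i \<le> p - 1 then m i else if i = p then j (p - 1) else 0)
                              (\<lambda>i. if i \<le> p - 1 then j i else 0) z
           - z p ^ (j p) * Q N p s z (j p) * B (p - 1) s m j z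
           + of_int (eps (j (p - 1)) (j p + m p)) *
             (\<Sum>k = min (j (p - 1)) (j p + m p) + 1 .. max (j (p - 1)) (j p + m p).
                z p powi (int (j p) - int k) * R N p s m j z k))
       \<and> (\<forall>j1 :: nat.
           B N s (\<lambda>i. if i = 2 then j1 else 0) (\<lambda>i. if i = 1 then j1 else 0) z
         = z 1 ^ j1 * La N s (\<lambda>i. 1 / z i) - z 1 ^ j1 * Q N 1 s z j1)"
  by (intro conjI allI impI B_modulation_shift B_head_shift_eq_La) (use assms in auto)

end
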